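(* Let $C$ be an $E$-linear code of length $2n$. Then (1) $(LSHull(C))_{Res}=C_{Res}\cap (C_{Res})^{\perp_S}$ and $(LSHull(C))_{Tor}=(C_{Res})^{\perp_S}\cap C_{Tor}$; (2) $(RSHull(C))_{Res}=C_{Res}\cap (C_{Tor})^{\perp_S}$ and $(RSHull(C))_{Tor}=C_{Tor}$; (3) $(SHull(C))_{Res}=C_{Res}\cap (C_{Tor})^{\perp_S}$ and $(SHull(C))_{Tor}=(C_{Res})^{\perp_S}\cap C_{Tor}$.
   Context: $E=\langle \kappa,\tau \mid 2\kappa=2\tau=0,\ \kappa^2=\kappa,\ \tau^2=\tau,\ \kappa\tau=\kappa,\ \tau\kappa=\tau\rangle$ is the non-unital noncommutative ring with four elements $\{0,\kappa,\tau,\zeta\}$, $\zeta=\kappa+\tau$; for every $e\in E$ one has $e\kappa=e\tau=e$ and $e\zeta=0$. Every $e\in E$ is uniquely $e=u\kappa+v\zeta$ with $u,v\in\mathbb{F}_2$, and $\pi:E\to\mathbb{F}_2$, $\pi(u\kappa+v\zeta)=u$, is extended componentwise to $E^{m}\to\mathbb{F}_2^m$. $\mathbb{F}_2$ acts on $E$ by $0\cdot e=0$, $1\cdot e=e$; for $v\in\mathbb{F}_2^m$ and $e\in E$, $ev=(ev_1,\dots,ev_m)\in E^m$. An $E$-linear code of length $2n$ is a left $E$-submodule $C$ of $E^{2n}$. Its residue code is $C_{Res}=\pi(C)$ and its torsion code is $C_{Tor}=\{v\in\mathbb{F}_2^{2n}: \zeta v\in C\}$ (both binary linear codes). The symplectic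 inner product of $x=(u|v)$, $y=(u'|v')$ (with $u,v,u',v'$ of length $n$, over $E$ or over $\mathbb{F}_2$) is $\langle x,y\rangle_s=\sum_{i=1}^n u_iv'_i+\sum_{i=1}^n v_iu'_i$ (order of factors as written). For a binary linear code $B\subseteq\mathbb{F}_2^{2n}$, $B^{\perp_S}=\{z\in\mathbb{F}_2^{2n}:\langle z,w\rangle_s=0\ \forall w\in B\}$. For an $E$-linear code $C$: $C^{\perp_{S_L}}=\{z\in E^{2n}:\langle z,w\rangle_s=0\ \forall w\in C\}$, $C^{\perp_{S_R}}=\{z\in E^{2n}:\langle w,z\rangle_s=0\ \forall w\in C\}$, $C^{\perp_S}=C^{\perp_{S_L}}\cap C^{\perp_{S_R}}$, and $LSHull(C)=C\cap C^{\perp_{S_L}}$, $RSHull(C)=C\cap C^{\perp_{S_R}}$, $SHull(C)=C\cap C^{\perp_S}$ (these are again $E$-linear codes, so their residue and torsion codes are defined). *)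

theory Defs
  imports Main
begin

text \<open>The four-element non-unital ring E = {0, kappa, tau, zeta}, zeta = kappa + tau.
  Elements are identified with their unique coordinates e = u*kappa + v*zeta, u,v in F2
  (F2 modelled by bool, addition = xor, multiplication = conjunction).\<close>

datatype E = E0 | Kap | Tau | Zet

fun E_u :: "E \<Rightarrow> bool" where
  "E_u E0 = False" | "E_u Kap = True" | "E_u Tau = True" | "E_u Zet = False"

fun E_v :: "E \<Rightarrow> bool" where
  "E_v E0 = False" | "E_v Kap = False" | "E_v Tau = True" | "E_v Zet = True"

definition E_of_uv :: "bool \<Rightarrow> bool \<Rightarrow> E" where
  "E_of_uv u v = (if u then (if v then Tau else Kap) else (if v then Zet else E0))"

definition eadd :: "E \<Rightarrow> E \<Rightarrow> E" where
  "eadd x y = E_of_uv (E_u x \<noteq> E_u y) (E_v x \<noteq> E_v y)"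

text \<open>Multiplication determined by the presentation: kappa^2 = kappa, tau^2 = tau,
  kappa tau = kappa, tau kappa = tau; equivalently e*kappa = e*tau = e, e*zeta = 0,
  i.e. x * y = u(y) x.\<close>
definition emul :: "E \<Rightarrow> E \<Rightarrow> E" where
  "emul x y = (if E_u y then x else E0)"

definition piE :: "E \<Rightarrow> bool" where "piE e = E_u e"

definition piV :: "E list \<Rightarrow> bool list" where "piV x = map piE x"

definition bsmul :: "bool \<Rightarrow> E \<Rightarrow> E" where
  "bsmul b e = (if b then e else E0)"

definition evec :: "E \<Rightarrow> bool list \<Rightarrow> E list" where
  "evec e v = map (\<lambda>b. bsmul b e) v"

definition lsmul :: "E \<Rightarrow> E list \<Rightarrow> E list" where
  "lsmul e x = map (emul e) x"

definition vadd :: "E list \<Rightarrow> E list \<Rightarrow> E list" where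
  "vadd x y = map2 eadd x y"

definition E_linear :: "nat \<Rightarrow> E list set \<Rightarrow> bool" where
  "E_linear n C \<longleftrightarrow> C \<subseteq> {x. length x = 2*n} \<and> replicate (2*n) E0 \<in> C
     \<and> (\<forall>x\<in>C. \<forall>y\<in>C. vadd x y \<in> C)
     \<and> (\<forall>e. \<forall>x\<in>C. lsmul e x \<in> C)"

definition Res :: "E list set \<Rightarrow> bool list set" where
  "Res C = piV ` C"

definition Tor :: "nat \<Rightarrow> E list set \<Rightarrow> bool list set" where
  "Tor n C = {v. length v = 2*n \<and> evec Zet v \<in> C}"

definition esum :: "E list \<Rightarrow> E" where
  "esum xs = foldr eadd xs E0"

definition sympE :: "nat \<Rightarrow> E list \<Rightarrow> E list \<Rightarrow> E" where
  "sympE n x y = eadd (esum (map (\<lambda>i. emul (x ! i) (y ! (n + i))) [0..<n]))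
                      (esum (map (\<lambda>i. emul (x ! (n + i)) (y ! i)) [0..<n]))"

definition bsum :: "bool list \<Rightarrow> bool" where
  "bsum xs = foldr (\<lambda>a b. a \<noteq> b) xs False"

definition sympB :: "nat \<Rightarrow> bool list \<Rightarrow> bool list \<Rightarrow> bool" where
  "sympB n x y = (bsum (map (\<lambda>i. x ! i \<and> y ! (n + i)) [0..<n])
                  \<noteq> bsum (map (\<lambda>i. x ! (n + i) \<and> y ! i) [0..<n]))"

definition Sdual :: "nat \<Rightarrow> bool list set \<Rightarrow> bool list set" where
  "Sdual n B = {z. length z = 2*n \<and> (\<forall>w\<in>B. sympB n z w = False)}"

definition SdualL :: "nat \<Rightarrow> E list set \<Rightarrow> E list set" where
  "SdualL n C = {z. length z = 2*n \<and> (\<forall>w\<in>C. sympE n z w = E0)}"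

definition SdualR :: "nat \<Rightarrow> E list set \<Rightarrow> E list set" where
  "SdualR n C = {z. length z = 2*n \<and> (\<forall>w\<in>C. sympE n w z = E0)}"

definition SdualE :: "nat \<Rightarrow> E list set \<Rightarrow> E list set" where
  "SdualE n C = SdualL n C \<inter> SdualR n C"

definition LSHull :: "nat \<Rightarrow> E list set \<Rightarrow> E list set" where
  "LSHull n C = C \<inter> SdualL n C"

definition RSHull :: "nat \<Rightarrow> E list set \<Rightarrow> E list set" where
  "RSHull n C = C \<inter> SdualR n C"

definition SHull :: "nat \<Rightarrow> E list set \<Rightarrow> E list set" where
  "SHull n C = C \<inter> SdualE n C"

end

theory Submission
  imports Defs
begin

text \<open>Every \<open>x \<in> E\<^sup>2\<^sup>n\<close> is uniquely \<open>\<kappa>u + \<zeta>v\<close> with \<open>u = \<pi>(x)\<close>, and an \<open>E\<close>-linear code is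
  exactly \<open>\<kappa>C\<^sub>R\<^sub>e\<^sub>s + \<zeta>C\<^sub>T\<^sub>o\<^sub>r\<close>. Since \<open>e e' = \<pi>(e') e\<close> in \<open>E\<close>, the symplectic product
  \<open>\<langle>\<kappa>u + \<zeta>v, y\<rangle>\<^sub>s = \<kappa>\<langle>u, \<pi>(y)\<rangle>\<^sub>s + \<zeta>\<langle>v, \<pi>(y)\<rangle>\<^sub>s\<close> sees only the residue of \<open>y\<close>.
  Hence the left dual of \<open>C\<close> is \<open>\<kappa>C\<^sub>R\<^sub>e\<^sub>s\<^sup>\<perp> + \<zeta>C\<^sub>R\<^sub>e\<^sub>s\<^sup>\<perp>\<close>, and the right dual is
  \<open>\<kappa>C\<^sub>T\<^sub>o\<^sub>r\<^sup>\<perp> + \<zeta>\<bbbF>\<^sub>2\<^sup>2\<^sup>n\<close> because the residues and \<open>\<zeta>\<close>-parts of codewords together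
  make up \<open>C\<^sub>T\<^sub>o\<^sub>r \<supseteq> C\<^sub>R\<^sub>e\<^sub>s\<close>. So every hull is again of the form \<open>\<kappa>A + \<zeta>B\<close>, whose residue
  code is \<open>A\<close> and torsion code is \<open>B\<close>.\<close>

lemma E_u_eadd [simp]: "E_u (eadd x y) = (E_u x \<noteq> E_u y)"
  and E_v_eadd [simp]: "E_v (eadd x y) = (E_v x \<noteq> E_v y)"
  by (cases x; cases y; simp add: eadd_def E_of_uv_def)+

lemma E_u_emul [simp]: "E_u (emul x y) = (E_u x \<and> E_u y)"
  and E_v_emul [simp]: "E_v (emul x y) = (E_v x \<and> E_u y)"
  by (cases x; cases y; simp add: emul_def)+

lemma E_u_esum: "E_u (esum xs) = bsum (map E_u xs)"
  and E_v_esum: "E_v (esum xs) = bsum (map E_v xs)"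
  by (induction xs) (auto simp: esum_def bsum_def)

lemma E_eq_E0_iff: "e = E0 \<longleftrightarrow> \<not> E_u e \<and> \<not> E_v e"
  by (cases e) auto

lemma E_of_uv_coords [simp]: "E_u (E_of_uv u v) = u" "E_v (E_of_uv u v) = v"
  by (simp_all add: E_of_uv_def)

lemma E_of_uv_E_u_E_v: "E_of_uv (E_u e) (E_v e) = e"
  by (cases e) (simp_all add: E_of_uv_def)

definition zeta_coords :: "E list \<Rightarrow> bool list" where
  "zeta_coords x = map E_v x"

definition E_of_coords :: "bool list \<Rightarrow> bool list \<Rightarrow> E list" where
  "E_of_coords u v = map2 E_of_uv u v"

lemma length_piV [simp]: "length (piV x) = length x"
  and length_zeta_coords [simp]: "length (zeta_coords x) = length x"
  by (simp_all add: piV_def zeta_coords_def)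

lemma E_of_coords_piV_zeta_coords: "E_of_coords (piV x) (zeta_coords x) = x"
  by (induction x) (simp_all add: E_of_coords_def piV_def piE_def zeta_coords_def E_of_uv_E_u_E_v)

lemma
  assumes "length u = length v"
  shows piV_E_of_coords [simp]: "piV (E_of_coords u v) = u"
    and zeta_coords_E_of_coords [simp]: "zeta_coords (E_of_coords u v) = v"
    and length_E_of_coords [simp]: "length (E_of_coords u v) = length u"
  using assms by (induction u v rule: list_induct2)
    (simp_all add: E_of_coords_def piV_def piE_def zeta_coords_def)

lemma sympB_map:
  assumes "length x = 2*n" "length y = 2*n"
  shows "sympB n (map f x) (map g y) \<longleftrightarrow>
    bsum (map (\<lambda>i. f (x ! i) \<and> g (y ! (n + i))) [0..<n])
      \<noteq> bsum (map (\<lambda>i. f (x ! (n + i)) \<and> g (y ! i)) [0..<n])"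
  unfolding sympB_def
  by (intro arg_cong2[where f="\<lambda>a b. a \<noteq> b"] arg_cong[where f=bsum] map_cong)
    (simp_all add: assms)

lemma
  assumes "length x = 2*n" "length y = 2*n"
  shows E_u_sympE: "E_u (sympE n x y) = sympB n (piV x) (piV y)"
    and E_v_sympE: "E_v (sympE n x y) = sympB n (zeta_coords x) (piV y)"
  by (simp_all add: sympE_def E_u_esum E_v_esum piV_def piE_def[abs_def] zeta_coords_def
      sympB_map assms o_def)

lemma sympE_eq_E0_iff:
  assumes "length x = 2*n" "length y = 2*n"
  shows "sympE n x y = E0 \<longleftrightarrow>
    \<not> sympB n (piV x) (piV y) \<and> \<not> sympB n (zeta_coords x) (piV y)"
  using assms by (simp add: E_eq_E0_iff E_u_sympE E_v_sympE)

lemma sympB_commute: "sympB n x y = sympB n y x"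
  by (auto simp: sympB_def conj_commute)

lemma bsum_False: "\<forall>a\<in>set xs. \<not> a \<Longrightarrow> \<not> bsum xs"
  by (induction xs) (auto simp: bsum_def)

lemma sympB_replicate_False: "\<not> sympB n (replicate (2*n) False) y"
  by (simp add: sympB_def bsum_False)

lemma replicate_False_in_Sdual: "replicate (2*n) False \<in> Sdual n B"
  by (simp add: Sdual_def sympB_replicate_False)

lemma Sdual_subset_lengths: "Sdual n B \<subseteq> {z. length z = 2*n}"
  by (auto simp: Sdual_def)

lemma Sdual_antimono: "B \<subseteq> B' \<Longrightarrow> Sdual n B' \<subseteq> Sdual n B"
  by (auto simp: Sdual_def)

text \<open>The code \<open>\<kappa>A + \<zeta>B\<close> of length \<open>2n\<close>.\<close>
definition coord_code :: "nat \<Rightarrow> bool list set \<Rightarrow> bool list set \<Rightarrow> E list set" where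
  "coord_code n A B = {x. length x = 2*n \<and> piV x \<in> A \<and> zeta_coords x \<in> B}"

lemma coord_code_Int:
  "coord_code n A B \<inter> coord_code n A' B' = coord_code n (A \<inter> A') (B \<inter> B')"
  by (auto simp: coord_code_def)

lemma Res_coord_code:
  assumes "A \<subseteq> {a. length a = 2*n}" "replicate (2*n) False \<in> B"
  shows "Res (coord_code n A B) = A"
proof
  show "Res (coord_code n A B) \<subseteq> A"
    by (auto simp: Res_def coord_code_def)
  show "A \<subseteq> Res (coord_code n A B)"
  proof
    fix a assume "a \<in> A"
    let ?x = "E_of_coords a (replicate (2*n) False)"
    from \<open>a \<in> A\<close> assms have "length a = 2*n" "?x \<in> coord_code n A B"
      by (auto simp: coord_code_def)
    then show "a \<in> Res (coord_code n A B)"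
      unfolding Res_def by (intro image_eqI[of _ _ ?x]) simp_all
  qed
qed

lemma piV_evec_Zet [simp]: "piV (evec Zet v) = replicate (length v) False"
  and zeta_coords_evec_Zet [simp]: "zeta_coords (evec Zet v) = v"
  and length_evec [simp]: "length (evec e v) = length v"
  by (simp_all add: piV_def piE_def zeta_coords_def evec_def bsmul_def map_replicate_const
      comp_def map_idI)

lemma Tor_subset_lengths: "Tor n C \<subseteq> {v. length v = 2*n}"
  by (auto simp: Tor_def)

lemma Tor_coord_code:
  assumes "B \<subseteq> {b. length b = 2*n}" "replicate (2*n) False \<in> A"
  shows "Tor n (coord_code n A B) = B"
  using assms by (auto simp: Tor_def coord_code_def)

lemma E_linear_length: "E_linear n C \<Longrightarrow> x \<in> C \<Longrightarrow> length x = 2*n"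
  by (auto simp: E_linear_def)

lemma E_linear_subset_lengths: "E_linear n C \<Longrightarrow> C \<subseteq> {x. length x = 2*n}"
  by (auto simp: E_linear_def)

lemma lsmul_eq_evec_piV: "lsmul e x = evec e (piV x)"
  by (simp add: lsmul_def evec_def piV_def piE_def emul_def bsmul_def)

lemma vadd_evec_Kap_piV: "vadd x (evec Kap (piV x)) = evec Zet (zeta_coords x)"
  by (induction x) (auto simp: vadd_def evec_def piV_def piE_def zeta_coords_def eadd_def
      bsmul_def E_of_uv_def split: E.splits)

lemma vadd_evec_Kap_evec_Zet:
  "length u = length v \<Longrightarrow> vadd (evec Kap u) (evec Zet v) = E_of_coords u v"
  by (induction u v rule: list_induct2)
    (auto simp: vadd_def evec_def E_of_coords_def eadd_def bsmul_def E_of_uv_def)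

lemma Res_subset_Tor:
  assumes "E_linear n C"
  shows "Res C \<subseteq> Tor n C"
proof
  fix a assume "a \<in> Res C"
  then obtain x where "x \<in> C" "a = piV x" by (auto simp: Res_def)
  with assms have "evec Zet a \<in> C" "length a = 2*n"
    by (metis E_linear_def lsmul_eq_evec_piV, simp add: E_linear_length)
  then show "a \<in> Tor n C" by (simp add: Tor_def)
qed

text \<open>Because \<open>\<kappa>x = \<kappa>\<pi>(x)\<close> and \<open>x + \<kappa>x = \<zeta>v(x)\<close>, an \<open>E\<close>-linear code contains \<open>x\<close>
  iff it contains \<open>\<kappa>\<pi>(x)\<close> and \<open>\<zeta>v(x)\<close>.\<close>
lemma E_linear_eq_coord_code:
  assumes C: "E_linear n C"
  shows "C = coord_code n (Res C) (Tor n C)"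
proof (intro set_eqI iffI)
  fix x assume "x \<in> C"
  with C have "vadd x (evec Kap (piV x)) \<in> C"
    by (metis E_linear_def lsmul_eq_evec_piV)
  with \<open>x \<in> C\<close> C show "x \<in> coord_code n (Res C) (Tor n C)"
    by (simp add: coord_code_def Res_def Tor_def E_linear_length vadd_evec_Kap_piV)
next
  fix x assume "x \<in> coord_code n (Res C) (Tor n C)"
  then obtain y where "y \<in> C" "piV x = piV y" "evec Zet (zeta_coords x) \<in> C"
    by (auto simp: coord_code_def Res_def Tor_def)
  with C have "vadd (evec Kap (piV x)) (evec Zet (zeta_coords x)) \<in> C"
    by (metis E_linear_def lsmul_eq_evec_piV)
  then show "x \<in> C"
    by (simp add: vadd_evec_Kap_evec_Zet E_of_coords_piV_zeta_coords)
qed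

lemma replicate_False_in_Res:
  assumes "E_linear n C"
  shows "replicate (2*n) False \<in> Res C"
proof -
  have "replicate (2*n) E0 \<in> C" using assms by (simp add: E_linear_def)
  then show ?thesis
    unfolding Res_def by (intro image_eqI[of _ _ "replicate (2*n) E0"]) (simp_all add: piV_def piE_def)
qed

lemma Res_Un_zeta_coords_eq_Tor:
  assumes C: "E_linear n C"
  shows "Res C \<union> zeta_coords ` C = Tor n C"
proof -
  have "zeta_coords ` C \<subseteq> Tor n C"
    using E_linear_eq_coord_code[OF C] by (auto simp: coord_code_def)
  moreover have "Tor n C \<subseteq> zeta_coords ` C"
    by (auto simp: Tor_def intro: image_eqI[of _ _ "evec Zet _"])
  ultimately show ?thesis using Res_subset_Tor[OF C] by blast
qed

lemma SdualL_eq_coord_code: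
  assumes "C \<subseteq> {x. length x = 2*n}"
  shows "SdualL n C = coord_code n (Sdual n (Res C)) (Sdual n (Res C))"
proof -
  have "sympE n x w = E0 \<longleftrightarrow> \<not> sympB n (piV x) (piV w) \<and> \<not> sympB n (zeta_coords x) (piV w)"
    if "length x = 2*n" "w \<in> C" for x w
    using that assms by (intro sympE_eq_E0_iff) auto
  then show ?thesis
    by (auto simp: SdualL_def coord_code_def Sdual_def Res_def)
qed

lemma SdualR_eq_coord_code:
  assumes "C \<subseteq> {x. length x = 2*n}"
  shows "SdualR n C = coord_code n (Sdual n (Res C \<union> zeta_coords ` C)) {b. length b = 2*n}"
proof -
  have "sympE n w x = E0 \<longleftrightarrow> \<not> sympB n (piV x) (piV w) \<and> \<not> sympB n (piV x) (zeta_coords w)"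
    if "length x = 2*n" "w \<in> C" for x w
    using that assms sympE_eq_E0_iff[of w n x] by (auto simp: sympB_commute)
  then show ?thesis
    by (auto simp: SdualR_def coord_code_def Sdual_def Res_def)
qed

lemma LSHull_eq_coord_code:
  assumes "E_linear n C"
  shows "LSHull n C = coord_code n (Res C \<inter> Sdual n (Res C)) (Sdual n (Res C) \<inter> Tor n C)"
proof -
  have "LSHull n C =
      coord_code n (Res C) (Tor n C) \<inter> coord_code n (Sdual n (Res C)) (Sdual n (Res C))"
    unfolding LSHull_def
    by (intro arg_cong2[where f="(\<inter>)"] E_linear_eq_coord_code SdualL_eq_coord_code
        E_linear_subset_lengths assms)
  then show ?thesis by (simp add: coord_code_Int Int_commute)
qed

lemma RSHull_eq_coord_code:
  assumes "E_linear n C"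
  shows "RSHull n C = coord_code n (Res C \<inter> Sdual n (Tor n C)) (Tor n C)"
proof -
  have "SdualR n C = coord_code n (Sdual n (Tor n C)) {b. length b = 2*n}"
    using SdualR_eq_coord_code[OF E_linear_subset_lengths[OF assms]]
    by (simp add: Res_Un_zeta_coords_eq_Tor[OF assms])
  then have "RSHull n C =
      coord_code n (Res C) (Tor n C) \<inter> coord_code n (Sdual n (Tor n C)) {b. length b = 2*n}"
    unfolding RSHull_def by (intro arg_cong2[where f="(\<inter>)"] E_linear_eq_coord_code assms)
  also have "\<dots> = coord_code n (Res C \<inter> Sdual n (Tor n C)) (Tor n C)"
    by (simp add: coord_code_Int Int_absorb2 Tor_subset_lengths)
  finally show ?thesis .
qed

lemma SHull_eq_coord_code:
  assumes "E_linear n C"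
  shows "SHull n C = coord_code n (Res C \<inter> Sdual n (Tor n C)) (Sdual n (Res C) \<inter> Tor n C)"
proof -
  have "SHull n C = LSHull n C \<inter> RSHull n C"
    by (auto simp: SHull_def LSHull_def RSHull_def SdualE_def)
  also have "\<dots> = coord_code n (Res C \<inter> Sdual n (Res C) \<inter> (Res C \<inter> Sdual n (Tor n C)))
      (Sdual n (Res C) \<inter> Tor n C)"
    by (simp add: LSHull_eq_coord_code RSHull_eq_coord_code assms coord_code_Int)
  also have "Res C \<inter> Sdual n (Res C) \<inter> (Res C \<inter> Sdual n (Tor n C)) = Res C \<inter> Sdual n (Tor n C)"
    using Sdual_antimono[OF Res_subset_Tor[OF assms]] by blast
  finally show ?thesis .
qed

theorem mainTheorem1:
  assumes "E_linear n C"
  shows "Res (LSHull n C) = Res C \<inter> Sdual n (Res C)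
       \<and> Tor n (LSHull n C) = Sdual n (Res C) \<inter> Tor n C
       \<and> Res (RSHull n C) = Res C \<inter> Sdual n (Tor n C)
       \<and> Tor n (RSHull n C) = Tor n C
       \<and> Res (SHull n C) = Res C \<inter> Sdual n (Tor n C)
       \<and> Tor n (SHull n C) = Sdual n (Res C) \<inter> Tor n C"
proof -
  have "replicate (2*n) False \<in> Res C" "replicate (2*n) False \<in> Tor n C"
    using replicate_False_in_Res Res_subset_Tor assms by blast+
  then show ?thesis
    using replicate_False_in_Sdual Sdual_subset_lengths Tor_subset_lengths
    by (simp add: LSHull_eq_coord_code RSHull_eq_coord_code SHull_eq_coord_code assms
        Res_coord_code Tor_coord_code le_infI1 le_infI2)
qed

end
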